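(* For all $N$-tuples $\mathbf{i},\mathbf{j}$ with $\mathbf{0}\leq\mathbf{i},\mathbf{j}\leq\boldsymbol{\ell}$ componentwise, $$\sum_{\mathbf{x}=\mathbf{0}}^{\boldsymbol{\ell}} T_{\mathbf{i}}(\mathbf{x})\,U_{\mathbf{j}}(\mathbf{x})=\delta_{\mathbf{i},\mathbf{j}}\,.$$
   Context: Fix an $N$-tuple $\boldsymbol{\ell}=(\ell_1,\dots,\ell_N)$ of nonnegative integers and complex parameters $\omega,\omega^\star,a_1,\dots,a_N$, with $\omega,\omega^\star\notin\{-2|\boldsymbol{\ell}|+1,\dots,-2,-1\}$ (so that all denominators below are nonzero). Notation: for an $N$-tuple $\mathbf{n}$, $|\mathbf{n}|_j^k=\sum_{p=j}^k n_p$ (equal to $0$ if $j>k$) and $|\mathbf{n}|=|\mathbf{n}|_1^N$; $(x)_k=x(x+1)\cdots(x+k-1)$ is the Pochhammer symbol with $(x)_0=1$; a sum $\sum_{\mathbf{n}=\mathbf{a}}^{\mathbf{b}}$ runs over all $\mathbf{n}$ with $a_p\leq n_p\leq b_p$ for every $p$, and $\min,\max$ of tuples are taken componentwise. Define, for $\mathbf{0}\leq\mathbf{i},\mathbf{x}\leq\boldsymbol{\ell}$, $$T_{\mathbf{i}}(\mathbf{x})=\sum_{\mathbf{n}=\mathbf{0}}^{\min(\mathbf{i},\mathbf{x})}\prod_{p=1}^{N}\frac{(-x_p)_{n_p}(-i_p)_{n_p}(-\ell_p)_{i_p}}{(1)_{n_p}(-\ell_p)_{n_p}(1)_{i_p}}\,\frac{(|\mathbf{x}|_1^{p-1}+|\mathbf{n}|_1^p+|\boldsymbol{\ell}|_p^N+a_p+\omega+1)_{x_p-n_p}}{(|\mathbf{x}|+|\mathbf{n}|+|\mathbf{x}|_1^{p-1}-|\mathbf{n}|_1^{p-1}+\omega)_{x_p-n_p}}\,\frac{(|\mathbf{i}|_1^{p-1}+|\mathbf{n}|_1^p+|\boldsymbol{\ell}|_{p+1}^N-a_p+\omega^\star)_{i_p-n_p}}{(|\mathbf{i}|+|\mathbf{n}|+|\mathbf{i}|_1^{p-1}-|\mathbf{n}|_1^{p-1}+\omega^\star)_{i_p-n_p}}$$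 and $$U_{\mathbf{i}}(\mathbf{x})=\sum_{\mathbf{n}=\max(\mathbf{x},\mathbf{i})}^{\boldsymbol{\ell}}\prod_{p=1}^{N}\frac{(-n_p)_{x_p}(-n_p)_{i_p}(-\ell_p)_{n_p}}{(1)_{x_p}(-\ell_p)_{i_p}(1)_{n_p}}\,\frac{(|\mathbf{x}|_1^p+|\mathbf{n}|_1^{p-1}+|\boldsymbol{\ell}|_p^N+a_p+\omega+1)_{n_p-x_p}}{(2|\mathbf{x}|+|\mathbf{n}|_1^{p-1}-|\mathbf{x}|_1^{p-1}+\omega+1)_{n_p-x_p}}\,\frac{(|\mathbf{i}|_1^p+|\mathbf{n}|_1^{p-1}+|\boldsymbol{\ell}|_{p+1}^N-a_p+\omega^\star)_{n_p-i_p}}{(2|\mathbf{i}|+|\mathbf{n}|_1^{p-1}-|\mathbf{i}|_1^{p-1}+\omega^\star+1)_{n_p-i_p}}\,.$$ These are the change-of-basis coefficients between the eigenbasis $V(\mathbf{x})$ of $A$ and the eigenbasis $V_{\mathbf{i}}$ of $A^\star$ for the type II tridiagonal pair $(A,A^\star)$ of the paper: $V_{\mathbf{i}}=\sum_{\mathbf{x}}T_{\mathbf{i}}(\mathbf{x})V(\mathbf{x})$ and $V(\mathbf{x})=\sum_{\mathbf{i}}U_{\mathbf{i}}(\mathbf{x})V_{\mathbf{i}}$. *)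

theory Defs
  imports "HOL-Analysis.Analysis"
begin

text \<open>N-tuples are functions nat => nat indexed by 1..N.
  psum n j k = |n|_j^k (zero if j > k).\<close>

definition psum :: "(nat \<Rightarrow> nat) \<Rightarrow> nat \<Rightarrow> nat \<Rightarrow> complex" where
  "psum n j k = of_nat (\<Sum>p\<in>{j..k}. n p)"

definition tbox :: "nat \<Rightarrow> (nat \<Rightarrow> nat) \<Rightarrow> (nat \<Rightarrow> nat) \<Rightarrow> (nat \<Rightarrow> nat) set" where
  "tbox N a b = PiE {1..N} (\<lambda>p. {a p..b p})"

definition tmin :: "(nat \<Rightarrow> nat) \<Rightarrow> (nat \<Rightarrow> nat) \<Rightarrow> nat \<Rightarrow> nat" where
  "tmin u v = (\<lambda>p. min (u p) (v p))"

definition tmax :: "(nat \<Rightarrow> nat) \<Rightarrow> (nat \<Rightarrow> nat) \<Rightarrow> nat \<Rightarrow> nat" where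
  "tmax u v = (\<lambda>p. max (u p) (v p))"

definition Tcoef :: "nat \<Rightarrow> (nat \<Rightarrow> nat) \<Rightarrow> complex \<Rightarrow> complex \<Rightarrow> (nat \<Rightarrow> complex)
    \<Rightarrow> (nat \<Rightarrow> nat) \<Rightarrow> (nat \<Rightarrow> nat) \<Rightarrow> complex" where
  "Tcoef N l \<omega> \<omega>s a i x =
    (\<Sum>n\<in>tbox N (\<lambda>_. 0) (tmin i x).
      \<Prod>p\<in>{1..N}.
        pochhammer (- of_nat (x p)) (n p) * pochhammer (- of_nat (i p)) (n p)
          * pochhammer (- of_nat (l p)) (i p)
        / (pochhammer 1 (n p) * pochhammer (- of_nat (l p)) (n p) * pochhammer 1 (i p))
        * pochhammer (psum x 1 (p - 1) + psum n 1 p + psum l p N + a p + \<omega> + 1) (x p - n p)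
        / pochhammer (psum x 1 N + psum n 1 N + psum x 1 (p - 1) - psum n 1 (p - 1) + \<omega>) (x p - n p)
        * pochhammer (psum i 1 (p - 1) + psum n 1 p + psum l (p + 1) N - a p + \<omega>s) (i p - n p)
        / pochhammer (psum i 1 N + psum n 1 N + psum i 1 (p - 1) - psum n 1 (p - 1) + \<omega>s) (i p - n p))"

definition Ucoef :: "nat \<Rightarrow> (nat \<Rightarrow> nat) \<Rightarrow> complex \<Rightarrow> complex \<Rightarrow> (nat \<Rightarrow> complex)
    \<Rightarrow> (nat \<Rightarrow> nat) \<Rightarrow> (nat \<Rightarrow> nat) \<Rightarrow> complex" where
  "Ucoef N l \<omega> \<omega>s a i x =
    (\<Sum>n\<in>tbox N (tmax x i) l.
      \<Prod>p\<in>{1..N}.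
        pochhammer (- of_nat (n p)) (x p) * pochhammer (- of_nat (n p)) (i p)
          * pochhammer (- of_nat (l p)) (n p)
        / (pochhammer 1 (x p) * pochhammer (- of_nat (l p)) (i p) * pochhammer 1 (n p))
        * pochhammer (psum x 1 p + psum n 1 (p - 1) + psum l p N + a p + \<omega> + 1) (n p - x p)
        / pochhammer (2 * psum x 1 N + psum n 1 (p - 1) - psum x 1 (p - 1) + \<omega> + 1) (n p - x p)
        * pochhammer (psum i 1 p + psum n 1 (p - 1) + psum l (p + 1) N - a p + \<omega>s) (n p - i p)
        / pochhammer (2 * psum i 1 N + psum n 1 (p - 1) - psum i 1 (p - 1) + \<omega>s + 1) (n p - i p))"

end

theory Submission
  imports Defs
begin

text \<open>
  Write \<open>|u| = u_1 + ... + u_N\<close>, \<open>(z)_k\<close> for the Pochhammer symbol, and consider the kernel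
  \<open>E(u, v) = prod_p C(v_p, u_p) (|v|_1^(p-1) + |u|_1^p + alpha_p)_(v_p - u_p)\<close>
  together with the two triangular matrices
  \<open>B(n, x) = (-1)^|n| E(n, x) / (|x| + |n| + omega)_(|x| - |n|)\<close> and
  \<open>C(x, m) = (-1)^|x| E(x, m) / (2|x| + omega + 1)_(|m| - |x|)\<close>.
  Writing \<open>(-x)_n = (-1)^n C(x, n) n!\<close> and letting the prefix sums in the denominators telescope,
  T and U factor as \<open>T_i(x) = sum_n w(i)/w(n) B'(n, i) B(n, x)\<close> and
  \<open>U_j(x) = sum_n C(x, n) w(n)/w(j) C'(j, n)\<close>, where \<open>w(u) = prod_p (-l_p)_(u_p) / u_p!\<close> and
  the primed matrices use the parameters of the second Pochhammer family (alpha, omega replaced by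
  gamma, omega*).
  Summing \<open>E(n, x) E(x, m)\<close> over a level \<open>|x| = k\<close> gives \<open>C(|m| - |n|, k - |n|) E(n, m)\<close>
  (a Vandermonde-type convolution, by induction on N). Hence both \<open>B C = 1\<close> and \<open>C B = 1\<close> reduce
  to one-variable alternating sums of inverse Pochhammer symbols: the first telescopes, the second is
  an M-th finite difference of a polynomial of degree M - 1. The excluded values of omega are exactly
  those that would make their denominators vanish. Finally
  \<open>sum_x T_i(x) U_j(x) = w(i)/w(j) sum_n C'(j, n) B'(n, i) = delta_ij\<close>.
\<close>

lemma sum_if_ge_shift:
  fixes F :: "nat \<Rightarrow> 'a::comm_monoid_add"
  assumes "s \<le> u" "u \<le> L" "\<And>k. u < k \<Longrightarrow> F k = 0"
  shows "(\<Sum>k\<in>{0..L}. if s \<le> k then F k else 0) = (\<Sum>j\<le>u - s. F (s + j))"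
proof -
  have "(\<Sum>k\<in>{0..L}. if s \<le> k then F k else 0) = (\<Sum>k\<in>{s..u}. if s \<le> k then F k else 0)"
    using assms by (intro sum.mono_neutral_right) auto
  also have "\<dots> = (\<Sum>k\<in>{s..u}. F k)" by (rule sum.cong) auto
  also have "\<dots> = (\<Sum>j\<in>{0..u - s}. F (j + s))"
    using sum.shift_bounds_cl_nat_ivl[of F 0 s "u - s"] assms by simp
  finally show ?thesis by (simp add: atMost_atLeast0 add.commute)
qed

lemma sum_product_reassoc:
  fixes f k :: "'b \<Rightarrow> 'a::comm_semiring_0"
  shows "(\<Sum>x\<in>X. (\<Sum>n\<in>Y. f n * g n x) * (\<Sum>m\<in>Z. h x m * k m))
    = (\<Sum>n\<in>Y. \<Sum>m\<in>Z. f n * k m * (\<Sum>x\<in>X. g n x * h x m))"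
proof -
  have "(\<Sum>x\<in>X. (\<Sum>n\<in>Y. f n * g n x) * (\<Sum>m\<in>Z. h x m * k m))
      = (\<Sum>x\<in>X. \<Sum>n\<in>Y. \<Sum>m\<in>Z. f n * k m * (g n x * h x m))"
    by (simp add: sum_product mult_ac)
  also have "\<dots> = (\<Sum>n\<in>Y. \<Sum>x\<in>X. \<Sum>m\<in>Z. f n * k m * (g n x * h x m))"
    by (rule sum.swap)
  also have "\<dots> = (\<Sum>n\<in>Y. \<Sum>m\<in>Z. \<Sum>x\<in>X. f n * k m * (g n x * h x m))"
    by (rule sum.cong[OF refl], rule sum.swap)
  finally show ?thesis by (simp add: sum_distrib_left)
qed

section \<open>One-variable Pochhammer identities\<close>

lemma pochhammer_add_one:
  fixes z :: "'a::comm_ring_1"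
  shows "pochhammer (z + 1) k = pochhammer z k + of_nat k * pochhammer (z + 1) (k - 1)"
proof (cases k)
  case 0
  then show ?thesis by simp
next
  case (Suc k')
  have "pochhammer (z + 1) (Suc k') = (z + 1 + of_nat k') * pochhammer (z + 1) k'"
    by (simp add: pochhammer_rec')
  moreover have "pochhammer z (Suc k') = z * pochhammer (z + 1) k'"
    by (simp add: pochhammer_rec)
  ultimately show ?thesis using Suc by (simp add: algebra_simps)
qed

lemma pochhammer_neg_of_nat:
  "pochhammer (- of_nat x) n = (-1) ^ n * of_nat (x choose n) * (fact n :: 'a::field_char_0)"
proof -
  have "pochhammer (of_nat x - of_nat n + 1) n = (of_nat x gchoose n) * (fact n :: 'a)"
    by (simp add: gbinomial_pochhammer')
  then show ?thesis unfolding pochhammer_minus by (simp add: binomial_gbinomial mult.assoc)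
qed

lemma pochhammer_shifted_nonzero:
  fixes c :: "'a::field_char_0"
  assumes "\<forall>t. 1 \<le> t \<and> t \<le> B \<longrightarrow> c + of_nat t \<noteq> 0" and "1 \<le> s" and "s + k \<le> Suc B"
  shows "pochhammer (c + of_nat s) k \<noteq> 0"
proof
  assume "pochhammer (c + of_nat s) k = 0"
  then obtain t where t: "t < k" "c + of_nat s = - of_nat t"
    unfolding pochhammer_eq_0_iff by auto
  then have "c + of_nat (s + t) = 0" by (simp add: add.assoc[symmetric])
  moreover have "1 \<le> s + t \<and> s + t \<le> B" using t assms(2,3) by auto
  ultimately show False using assms(1) by blast
qed

lemma binomial_pochhammer_add_one:
  fixes z :: "'a::comm_ring_1"
  shows "of_nat (Suc M choose j) * pochhammer (z + 1) (Suc M - j)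
    = of_nat (Suc M choose j) * pochhammer z (Suc M - j) + of_nat (Suc M) * of_nat (M choose j) * pochhammer (z + 1) (M - j)"
proof -
  have absorb: "of_nat (Suc M choose j) * of_nat (Suc M - j) = (of_nat (Suc M) * of_nat (M choose j) :: 'a)"
    using binomial_absorb_comp[of "Suc M" j] by (metis diff_Suc_1 mult.commute of_nat_mult)
  have "pochhammer (z + 1) (Suc M - j) = pochhammer z (Suc M - j) + of_nat (Suc M - j) * pochhammer (z + 1) (M - j)"
    using pochhammer_add_one[of z "Suc M - j"] by simp
  then show ?thesis by (simp only: distrib_left mult.assoc[symmetric] absorb)
qed

definition binomial_pochhammer_sum :: "nat \<Rightarrow> nat \<Rightarrow> nat \<Rightarrow> 'a::comm_ring_1 \<Rightarrow> 'a" where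
  "binomial_pochhammer_sum A M r w = (\<Sum>j\<le>M. of_nat (M choose j)
      * (if j \<le> r then of_nat (A choose (r - j)) else 0)
      * pochhammer (w - of_nat j) j * pochhammer (w + of_nat A) (M - j))"

lemma binomial_pochhammer_sum_Suc:
  "binomial_pochhammer_sum (Suc A) (Suc M) (Suc r) w
     = of_nat (Suc M) * binomial_pochhammer_sum (Suc A) M (Suc r) w
       + binomial_pochhammer_sum A (Suc M) (Suc r) w + binomial_pochhammer_sum A (Suc M) r w"
proof -
  define g :: "nat \<Rightarrow> nat \<Rightarrow> nat \<Rightarrow> 'a" where
    "g A r j = (if j \<le> r then of_nat (A choose (r - j)) else 0)" for A r j
  have sum_g: "binomial_pochhammer_sum A M r w = (\<Sum>j\<le>M. of_nat (M choose j) * g A r j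
      * pochhammer (w - of_nat j) j * pochhammer (w + of_nat A) (M - j))" for A M r
    unfolding binomial_pochhammer_sum_def g_def ..
  have pascal: "g (Suc A) (Suc r) j = g A (Suc r) j + g A r j" for j
    unfolding g_def by (cases "j \<le> r"; cases "j = Suc r") (auto simp: Suc_diff_le)
  have summand: "of_nat (Suc M choose j) * g (Suc A) (Suc r) j * pochhammer (w - of_nat j) j
      * pochhammer (w + of_nat (Suc A)) (Suc M - j)
    = of_nat (Suc M) * (of_nat (M choose j) * g (Suc A) (Suc r) j
        * pochhammer (w - of_nat j) j * pochhammer (w + of_nat (Suc A)) (M - j))
      + of_nat (Suc M choose j) * g A (Suc r) j * pochhammer (w - of_nat j) j
        * pochhammer (w + of_nat A) (Suc M - j)
      + of_nat (Suc M choose j) * g A r j * pochhammer (w - of_nat j) j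
        * pochhammer (w + of_nat A) (Suc M - j)" (is "?L = ?R") for j
  proof -
    have shift: "of_nat (Suc M choose j) * pochhammer (w + of_nat (Suc A)) (Suc M - j)
        = of_nat (Suc M choose j) * pochhammer (w + of_nat A) (Suc M - j)
          + of_nat (Suc M) * of_nat (M choose j) * pochhammer (w + of_nat (Suc A)) (M - j)"
    proof -
      have "w + of_nat (Suc A) = (w + of_nat A) + 1" by simp
      then show ?thesis by (simp only: binomial_pochhammer_add_one)
    qed
    have "?L = (g A (Suc r) j + g A r j) * pochhammer (w - of_nat j) j
        * (of_nat (Suc M choose j) * pochhammer (w + of_nat (Suc A)) (Suc M - j))"
      unfolding pascal by (simp only: mult_ac)
    also have "\<dots> = ?R" unfolding shift by (simp add: pascal algebra_simps)
    finally show ?thesis .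
  qed
  have "binomial_pochhammer_sum (Suc A) (Suc M) (Suc r) w
      = (\<Sum>j\<le>Suc M. of_nat (Suc M) * (of_nat (M choose j) * g (Suc A) (Suc r) j
          * pochhammer (w - of_nat j) j * pochhammer (w + of_nat (Suc A)) (M - j))
        + of_nat (Suc M choose j) * g A (Suc r) j * pochhammer (w - of_nat j) j
          * pochhammer (w + of_nat A) (Suc M - j)
        + of_nat (Suc M choose j) * g A r j * pochhammer (w - of_nat j) j
          * pochhammer (w + of_nat A) (Suc M - j))"
    unfolding sum_g by (rule sum.cong[OF refl summand])
  also have "\<dots> = of_nat (Suc M) * binomial_pochhammer_sum (Suc A) M (Suc r) w
      + binomial_pochhammer_sum A (Suc M) (Suc r) w + binomial_pochhammer_sum A (Suc M) r w"
    unfolding sum.distrib sum_distrib_left sum_g by (simp add: binomial_eq_0)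
  finally show ?thesis .
qed

lemma binomial_pochhammer_sum_0_left:
  "binomial_pochhammer_sum 0 M r w = of_nat (M choose r) * pochhammer (w - of_nat r) M"
proof (cases "r \<le> M")
  case True
  have "binomial_pochhammer_sum 0 M r w
      = of_nat (M choose r) * (pochhammer (w - of_nat r) r * pochhammer (w - of_nat r + of_nat r) (M - r))"
    unfolding binomial_pochhammer_sum_def using True
    by (subst sum.mono_neutral_right[where S = "{r}"]) (auto simp: binomial_eq_0)
  then show ?thesis using pochhammer_product[OF True, of "w - of_nat r"] by simp
next
  case False
  then have "binomial_pochhammer_sum 0 M r w = 0"
    unfolding binomial_pochhammer_sum_def by (intro sum.neutral) (auto simp: binomial_eq_0)
  then show ?thesis using False by (simp add: binomial_eq_0)
qed

lemma binomial_pochhammer_sum_0_right: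
  "binomial_pochhammer_sum A M 0 w = pochhammer (w + of_nat A) M"
proof -
  have "binomial_pochhammer_sum A M 0 w = (\<Sum>j\<in>{0}. of_nat (M choose j)
      * (if j \<le> 0 then of_nat (A choose (0 - j)) else 0)
      * pochhammer (w - of_nat j) j * pochhammer (w + of_nat A) (M - j))"
    unfolding binomial_pochhammer_sum_def by (rule sum.mono_neutral_right) auto
  then show ?thesis by simp
qed

lemma binomial_pochhammer_sum_eq:
  "binomial_pochhammer_sum A M r w = of_nat ((A + M) choose r) * pochhammer (w + of_nat A - of_nat r) M"
proof (induction M arbitrary: A r)
  case 0
  then show ?case by (simp add: binomial_pochhammer_sum_def)
next
  case (Suc M)
  note IH_M = Suc.IH
  show ?case
  proof (induction A arbitrary: r)
    case 0
    then show ?case by (simp add: binomial_pochhammer_sum_0_left)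
  next
    case (Suc A)
    show ?case
    proof (cases r)
      case 0
      then show ?thesis by (simp add: binomial_pochhammer_sum_0_right)
    next
      case (Suc r')
      define z where "z = w + of_nat A - of_nat r' - 1"
      have z1: "w + of_nat (Suc A) - of_nat (Suc r') = z + 1" unfolding z_def by simp
      have z0: "w + of_nat A - of_nat (Suc r') = z" unfolding z_def by simp
      have z1': "w + of_nat A - of_nat r' = z + 1" unfolding z_def by simp
      have shift: "pochhammer (z + 1) (Suc M) = pochhammer z (Suc M) + of_nat (Suc M) * pochhammer (z + 1) M"
        using pochhammer_add_one[of z "Suc M"] by simp
      have "binomial_pochhammer_sum (Suc A) (Suc M) (Suc r') w
          = of_nat (Suc M) * binomial_pochhammer_sum (Suc A) M (Suc r') w
            + binomial_pochhammer_sum A (Suc M) (Suc r') w + binomial_pochhammer_sum A (Suc M) r' w"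
        by (rule binomial_pochhammer_sum_Suc)
      also have "\<dots> = of_nat (Suc M) * (of_nat ((Suc A + M) choose Suc r') * pochhammer (z + 1) M)
          + of_nat ((A + Suc M) choose Suc r') * pochhammer z (Suc M)
          + of_nat ((A + Suc M) choose r') * pochhammer (z + 1) (Suc M)"
        unfolding IH_M[of "Suc A"] Suc.IH z1 z0 z1' by simp
      also have "\<dots> = of_nat ((Suc A + Suc M) choose Suc r') * pochhammer (z + 1) (Suc M)"
        unfolding shift by (simp add: algebra_simps)
      finally show ?thesis unfolding Suc z1 .
    qed
  qed
qed

text \<open>The inductive step of the level sum below: \<open>y\<close> is the last coordinate of \<open>x\<close>, and
  \<open>s, t\<close> and \<open>a, b\<close> are the first \<open>N\<close> prefix sums and the last coordinates of \<open>n\<close> and \<open>m\<close>.\<close>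

lemma sum_binomial_pochhammer_convolution:
  fixes c :: "'a::comm_ring_1"
  assumes "b \<le> L" and "s \<le> t"
  shows "(\<Sum>y\<in>{0..L}. (if y \<le> k \<and> s \<le> k - y then of_nat ((t - s) choose (k - y - s)) else 0)
      * ((if a \<le> y then of_nat (y choose a) * pochhammer (of_nat (k - y + (s + a)) + c) (y - a) else 0)
       * (if y \<le> b then of_nat (b choose y) * pochhammer (of_nat (t + k) + c) (b - y) else 0)))
    = (if s + a \<le> k then of_nat ((t + b - (s + a)) choose (k - (s + a))) else 0)
      * (if a \<le> b then of_nat (b choose a) * pochhammer (of_nat (t + (s + a)) + c) (b - a) else 0)"
    (is "sum ?f _ = ?R")
proof (cases "a \<le> b \<and> s + a \<le> k")
  case False
  then have "sum ?f {0..L} = 0" by (intro sum.neutral) auto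
  then show ?thesis using False by auto
next
  case True
  then have ab: "a \<le> b" and sak: "s + a \<le> k" by auto
  define r where "r = k - (s + a)"
  define M where "M = b - a"
  define A where "A = t - s"
  define w where "w = of_nat (r + 2 * s + a) + c"
  have "sum ?f {0..L} = sum ?f {a..b}"
    using assms(1) by (intro sum.mono_neutral_right) auto
  also have "\<dots> = sum (\<lambda>j. ?f (j + a)) {0..M}"
    using sum.shift_bounds_cl_nat_ivl[of ?f 0 a M] ab unfolding M_def by simp
  also have "\<dots> = (\<Sum>j\<le>M. of_nat (b choose a) * (of_nat (M choose j)
      * (if j \<le> r then of_nat (A choose (r - j)) else 0)
      * pochhammer (w - of_nat j) j * pochhammer (w + of_nat A) (M - j)))"
    unfolding atMost_atLeast0
  proof (rule sum.cong[OF refl])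
    fix j assume "j \<in> {0..M}"
    then have jb: "j + a \<le> b" unfolding M_def using ab by auto
    have choose: "of_nat ((j + a) choose a) * of_nat (b choose (j + a)) = (of_nat (b choose a) * of_nat (M choose j) :: 'a)"
      using choose_mult[of a "j + a" b] jb unfolding M_def by (simp add: mult.commute flip: of_nat_mult)
    show "?f (j + a) = of_nat (b choose a) * (of_nat (M choose j)
      * (if j \<le> r then of_nat (A choose (r - j)) else 0)
      * pochhammer (w - of_nat j) j * pochhammer (w + of_nat A) (M - j))"
    proof (cases "j \<le> r")
      case True
      have c1: "j + a \<le> k \<and> s \<le> k - (j + a)" using True sak unfolding r_def by auto
      have c2: "k - (j + a) - s = r - j" "b - (j + a) = M - j" unfolding r_def M_def by auto
      have c3: "of_nat (k - (j + a) + (s + a)) + c = w - of_nat j"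
        unfolding w_def r_def using True sak r_def by (simp add: of_nat_diff)
      have c4: "of_nat (t + k) + c = w + of_nat A"
        unfolding w_def A_def r_def using assms(2) sak by (simp add: of_nat_diff)
      have "of_nat ((j + a) choose a) * of_nat (b choose (j + a))
          * (of_nat (A choose (r - j)) * pochhammer (w - of_nat j) j * pochhammer (w + of_nat A) (M - j))
        = of_nat (b choose a) * of_nat (M choose j)
          * (of_nat (A choose (r - j)) * pochhammer (w - of_nat j) j * pochhammer (w + of_nat A) (M - j))"
        unfolding choose ..
      then show ?thesis using c1 jb True unfolding c2 c3 c4 A_def[symmetric] by (simp add: ac_simps)
    next
      case False
      then show ?thesis unfolding r_def by auto
    qed
  qed
  also have "\<dots> = of_nat (b choose a) * binomial_pochhammer_sum A M r w"
    unfolding binomial_pochhammer_sum_def sum_distrib_left ..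
  also have "\<dots> = ?R"
    unfolding binomial_pochhammer_sum_eq using True assms(2)
    by (simp add: A_def M_def r_def w_def of_nat_diff algebra_simps)
  finally show ?thesis .
qed

lemma sum_alternating_binomial_Suc:
  fixes f :: "nat \<Rightarrow> 'a::comm_ring_1"
  shows "(\<Sum>j\<le>Suc M. (-1) ^ j * of_nat (Suc M choose j) * f j)
    = (\<Sum>j\<le>M. (-1) ^ j * of_nat (M choose j) * (f j - f (Suc j)))"
proof -
  have A: "(\<Sum>j\<le>Suc M. (-1) ^ j * of_nat (Suc M choose j) * f j)
     = f 0 + (\<Sum>i\<le>M. (-1) ^ (Suc i) * of_nat (M choose i) * f (Suc i))
           + (\<Sum>i\<le>M. (-1) ^ (Suc i) * of_nat (M choose Suc i) * f (Suc i))"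
    unfolding sum.atMost_Suc_shift by (simp add: ring_distribs sum.distrib sum_negf sum_subtractf)
  have B: "(\<Sum>i\<le>M. (-1) ^ (Suc i) * of_nat (M choose Suc i) * f (Suc i))
      = (\<Sum>j\<le>Suc M. (-1) ^ j * of_nat (M choose j) * f j) - f 0"
    unfolding sum.atMost_Suc_shift by simp
  have C: "(\<Sum>j\<le>Suc M. (-1) ^ j * of_nat (M choose j) * f j) = (\<Sum>j\<le>M. (-1) ^ j * of_nat (M choose j) * f j)"
    by (simp add: binomial_eq_0)
  show ?thesis unfolding A B C by (simp add: algebra_simps sum.distrib sum_subtractf sum_negf)
qed

lemma sum_alternating_binomial_pochhammer:
  fixes y :: "'a::comm_ring_1"
  assumes "d < M"
  shows "(\<Sum>j\<le>M. (-1) ^ j * of_nat (M choose j) * pochhammer (y + of_nat j) d) = 0"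
  using assms
proof (induction M arbitrary: y d)
  case 0
  then show ?case by simp
next
  case (Suc M)
  have diff: "pochhammer (y + of_nat j) d - pochhammer (y + of_nat (Suc j)) d
     = - (of_nat d * pochhammer ((y + 1) + of_nat j) (d - 1))" for j
    using pochhammer_add_one[of "y + of_nat j" d] by (simp add: algebra_simps)
  have "(\<Sum>j\<le>Suc M. (-1) ^ j * of_nat (Suc M choose j) * pochhammer (y + of_nat j) d)
     = - of_nat d * (\<Sum>j\<le>M. (-1) ^ j * of_nat (M choose j) * pochhammer ((y + 1) + of_nat j) (d - 1))"
    unfolding sum_alternating_binomial_Suc diff by (simp add: sum_distrib_left algebra_simps)
  also have "\<dots> = 0"
    using Suc.IH[of "d - 1" "y + 1"] Suc.prems by (cases d) simp_all
  finally show ?case .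
qed

lemma sum_alternating_binomial_div_pochhammer':
  fixes c :: "'a::field_char_0"
  assumes nz: "\<forall>t. 1 \<le> t \<and> t \<le> 2 * M - 1 \<longrightarrow> c + of_nat t \<noteq> 0"
  shows "(\<Sum>j\<le>M. (-1) ^ j * of_nat (M choose j)
      / (pochhammer (c + 1) j * pochhammer (c + of_nat M + of_nat j) (M - j)))
    = (if M = 0 then 1 else 0)"
proof (cases M)
  case 0
  then show ?thesis by simp
next
  case (Suc M')
  define Z where "Z = pochhammer (c + 1) (2 * M - 1)"
  have Z_nz: "Z \<noteq> 0"
    unfolding Z_def using pochhammer_shifted_nonzero[OF nz, of 1 "2 * M - 1"] Suc by simp
  have Z_split: "Z = pochhammer (c + 1) j * pochhammer (c + 1 + of_nat j) (M - 1)
      * pochhammer (c + of_nat M + of_nat j) (M - j)" if "j \<le> M" for j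
  proof -
    have "2 * M - 1 = j + ((M - 1) + (M - j))" using that Suc by auto
    then have "Z = pochhammer (c + 1) j * (pochhammer (c + 1 + of_nat j) (M - 1)
        * pochhammer (c + 1 + of_nat j + of_nat (M - 1)) (M - j))"
      unfolding Z_def by (simp only: pochhammer_product')
    also have "c + 1 + of_nat j + of_nat (M - 1) = c + of_nat M + of_nat j"
      using Suc by (simp add: algebra_simps)
    finally show ?thesis by (simp add: mult.assoc)
  qed
  have "(\<Sum>j\<le>M. (-1) ^ j * of_nat (M choose j)
      / (pochhammer (c + 1) j * pochhammer (c + of_nat M + of_nat j) (M - j)))
     = (\<Sum>j\<le>M. (-1) ^ j * of_nat (M choose j) * pochhammer ((c + 1) + of_nat j) (M - 1)) / Z"
    unfolding sum_divide_distrib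
  proof (rule sum.cong[OF refl])
    fix j assume "j \<in> {..M}"
    then have j: "j \<le> M" by simp
    then have "pochhammer (c + 1) j * pochhammer (c + of_nat M + of_nat j) (M - j) \<noteq> 0"
      using Z_nz Z_split by auto
    then show "(-1) ^ j * of_nat (M choose j)
        / (pochhammer (c + 1) j * pochhammer (c + of_nat M + of_nat j) (M - j))
      = (-1) ^ j * of_nat (M choose j) * pochhammer ((c + 1) + of_nat j) (M - 1) / Z"
      using Z_nz unfolding Z_split[OF j] by (simp add: field_simps)
  qed
  also have "\<dots> = 0" using sum_alternating_binomial_pochhammer[of "M - 1" M "c + 1"] Suc by simp
  finally show ?thesis using Suc by simp
qed

lemma binomial_shifted_pascal:
  fixes c :: "'a::field_char_0"
  assumes j: "0 < j" "j < M"
  shows "of_nat ((M - 1) choose j) * (c + of_nat j)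
        + of_nat ((M - 1) choose (j - 1)) * (c + of_nat j + of_nat M)
      = of_nat (M choose j) * (c + of_nat (2 * j))"
proof -
  have b1: "of_nat M * of_nat ((M - 1) choose j) = (of_nat (M - j) * of_nat (M choose j) :: 'a)"
    using binomial_absorb_comp[of M j] by (metis of_nat_mult)
  have b2: "of_nat M * of_nat ((M - 1) choose (j - 1)) = (of_nat j * of_nat (M choose j) :: 'a)"
    using binomial_absorption[of "j - 1" M] j by (metis Suc_pred' of_nat_mult)
  have "of_nat M * (of_nat ((M - 1) choose j) * (c + of_nat j)
      + of_nat ((M - 1) choose (j - 1)) * (c + of_nat j + of_nat M))
    = (of_nat M * of_nat ((M - 1) choose j)) * (c + of_nat j)
      + (of_nat M * of_nat ((M - 1) choose (j - 1))) * (c + of_nat j + of_nat M)"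
    by (simp add: algebra_simps)
  also have "\<dots> = of_nat (M - j) * of_nat (M choose j) * (c + of_nat j)
      + of_nat j * of_nat (M choose j) * (c + of_nat j + of_nat M)"
    unfolding b1 b2 ..
  also have "\<dots> = of_nat M * (of_nat (M choose j) * (c + of_nat (2 * j)))"
    using j by (simp add: of_nat_diff algebra_simps)
  finally show ?thesis using j by simp
qed

lemma inverse_pochhammer_telescoping:
  fixes c :: "'a::field_char_0"
  assumes j: "0 < j" "j < M" and P_nz: "pochhammer (c + of_nat j) (Suc M) \<noteq> 0"
  shows "(-1) ^ j * of_nat (M choose j) / (pochhammer (c + of_nat j) j * pochhammer (c + of_nat (2 * j) + 1) (M - j))
    = (-1) ^ j * of_nat ((M - 1) choose j) / pochhammer (c + of_nat (Suc j)) M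
      + (-1) ^ j * of_nat ((M - 1) choose (j - 1)) / pochhammer (c + of_nat j) M"
proof -
  define P where "P = pochhammer (c + of_nat j) (Suc M)"
  define X where "X = pochhammer (c + of_nat j) j"
  define Y where "Y = pochhammer (c + of_nat (2 * j) + 1) (M - j)"
  have P_split: "P = X * (c + of_nat (2 * j)) * Y"
  proof -
    have "Suc M = j + Suc (M - j)" using j by simp
    then have "P = X * pochhammer (c + of_nat j + of_nat j) (Suc (M - j))"
      unfolding P_def X_def by (simp only: pochhammer_product')
    then show ?thesis unfolding Y_def pochhammer_rec by (simp add: algebra_simps)
  qed
  have P_last: "P = pochhammer (c + of_nat j) M * (c + of_nat j + of_nat M)"
    unfolding P_def pochhammer_Suc ..
  have P_first: "P = (c + of_nat j) * pochhammer (c + of_nat (Suc j)) M"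
    unfolding P_def pochhammer_rec by (simp add: add_ac)
  have "P \<noteq> 0" using P_nz unfolding P_def .
  then have nz: "X \<noteq> 0" "Y \<noteq> 0" "c + of_nat (2 * j) \<noteq> 0" "c + of_nat j \<noteq> 0" "c + of_nat j + of_nat M \<noteq> 0"
    using P_split P_last P_first by auto
  have first: "pochhammer (c + of_nat (Suc j)) M = P / (c + of_nat j)"
    using P_first nz by (simp add: field_simps)
  have last: "pochhammer (c + of_nat j) M = P / (c + of_nat j + of_nat M)"
    using P_last nz by (simp add: field_simps)
  have "(-1) ^ j * of_nat ((M - 1) choose j) / pochhammer (c + of_nat (Suc j)) M
      + (-1) ^ j * of_nat ((M - 1) choose (j - 1)) / pochhammer (c + of_nat j) M
    = (-1) ^ j * (of_nat ((M - 1) choose j) * (c + of_nat j)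
        + of_nat ((M - 1) choose (j - 1)) * (c + of_nat j + of_nat M)) / P"
    unfolding first last using nz \<open>P \<noteq> 0\<close> by (simp add: field_simps)
  also have "\<dots> = (-1) ^ j * (of_nat (M choose j) * (c + of_nat (2 * j))) / (X * (c + of_nat (2 * j)) * Y)"
    unfolding binomial_shifted_pascal[OF j] P_split ..
  also have "\<dots> = (-1) ^ j * of_nat (M choose j) / (X * Y)"
  proof -
    have "k \<noteq> 0 \<Longrightarrow> (-1) ^ j * (of_nat (M choose j) * k) / (X * k * Y) = (-1) ^ j * of_nat (M choose j) / (X * Y)"
      for k using nz(1,2) by (simp add: field_simps)
    then show ?thesis using nz(3) .
  qed
  finally show ?thesis unfolding X_def Y_def by simp
qed

lemma sum_alternating_binomial_div_pochhammer:
  fixes c :: "'a::field_char_0"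
  assumes nz: "\<forall>t. 1 \<le> t \<and> t \<le> 2 * M - 1 \<longrightarrow> c + of_nat t \<noteq> 0"
  shows "(\<Sum>j\<le>M. (-1) ^ j * of_nat (M choose j)
      / (pochhammer (c + of_nat j) j * pochhammer (c + of_nat (2 * j) + 1) (M - j)))
    = (if M = 0 then 1 else 0)"
proof (cases M)
  case 0
  then show ?thesis by simp
next
  case (Suc M')
  define g where "g j = (if j = 0 then 0
      else (-1) ^ (Suc j) * of_nat ((M - 1) choose (j - 1)) / pochhammer (c + of_nat j) M)" for j
  have telescoping: "(-1) ^ j * of_nat (M choose j)
      / (pochhammer (c + of_nat j) j * pochhammer (c + of_nat (2 * j) + 1) (M - j))
    = g (Suc j) - g j" if jM: "j \<le> M" for j
  proof -
    consider "j = 0" | "j = M" | "0 < j \<and> j < M" using jM by linarith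
    then show ?thesis
    proof cases
      case 1
      then show ?thesis unfolding g_def by (simp add: add.commute)
    next
      case 2
      then show ?thesis unfolding g_def using Suc by simp
    next
      case 3
      then have "pochhammer (c + of_nat j) (Suc M) \<noteq> 0"
        using pochhammer_shifted_nonzero[OF nz, of j "Suc M"] by simp
      then show ?thesis
        using inverse_pochhammer_telescoping[of j M c] 3 unfolding g_def by simp
    qed
  qed
  have "(\<Sum>j\<le>M. (-1) ^ j * of_nat (M choose j)
      / (pochhammer (c + of_nat j) j * pochhammer (c + of_nat (2 * j) + 1) (M - j)))
     = (\<Sum>j\<le>M. g (Suc j) - g j)"
    by (rule sum.cong[OF refl], rule telescoping) simp
  also have "\<dots> = g (Suc M) - g 0" by (simp add: sum_Suc_diff atMost_atLeast0)
  also have "\<dots> = 0" unfolding g_def using Suc by simp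
  finally show ?thesis using Suc by simp
qed

section \<open>Tuples, prefix sums and level sets\<close>

definition prefix_sum :: "(nat \<Rightarrow> nat) \<Rightarrow> nat \<Rightarrow> nat" where
  "prefix_sum u p = (\<Sum>q\<in>{1..p}. u q)"

lemma prefix_sum_0 [simp]: "prefix_sum u 0 = 0"
  unfolding prefix_sum_def by simp

lemma prefix_sum_Suc: "prefix_sum u (Suc p) = prefix_sum u p + u (Suc p)"
  unfolding prefix_sum_def by simp

lemma prefix_sum_upd: "p \<le> N \<Longrightarrow> prefix_sum (u(Suc N := y)) p = prefix_sum u p"
  unfolding prefix_sum_def by (intro sum.cong) auto

lemma prefix_sum_upd_Suc: "prefix_sum (u(Suc N := y)) (Suc N) = prefix_sum u N + y"
  unfolding prefix_sum_Suc using prefix_sum_upd[of N N u y] by simp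

lemma prefix_sum_mono: "\<forall>p\<in>{1..N}. u p \<le> v p \<Longrightarrow> prefix_sum u N \<le> prefix_sum v N"
  unfolding prefix_sum_def by (rule sum_mono) auto

lemma psum_1_eq_prefix_sum: "psum u 1 p = of_nat (prefix_sum u p)"
  unfolding psum_def prefix_sum_def ..

lemma prod_minus_one_power: "(\<Prod>p\<in>{1..N}. (-1::'a::comm_ring_1) ^ u p) = (-1) ^ prefix_sum u N"
  unfolding prefix_sum_def by (simp add: power_sum)

lemma finite_tbox [simp]: "finite (tbox N a b)"
  unfolding tbox_def by (auto intro: finite_PiE)

lemma tbox_memD: "x \<in> tbox N a b \<Longrightarrow> p \<in> {1..N} \<Longrightarrow> a p \<le> x p \<and> x p \<le> b p"
  unfolding tbox_def by auto

lemma tbox_eq_if_le_prefix_sum_eq: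
  assumes "n \<in> tbox N a b" "m \<in> tbox N a b" "\<forall>p\<in>{1..N}. n p \<le> m p" "prefix_sum n N = prefix_sum m N"
  shows "n = m"
proof -
  have "\<forall>p\<in>{1..N}. n p = m p"
  proof (rule ccontr)
    assume "\<not> (\<forall>p\<in>{1..N}. n p = m p)"
    then obtain p where p: "p \<in> {1..N}" "n p < m p" using assms(3) by force
    have "prefix_sum n N < prefix_sum m N" unfolding prefix_sum_def
      by (rule sum_strict_mono_ex1) (use assms(3) p in auto)
    then show False using assms(4) by simp
  qed
  then show ?thesis using assms(1,2) unfolding tbox_def by (intro PiE_ext) auto
qed

lemma sum_tbox_Suc:
  "(\<Sum>x\<in>tbox (Suc N) a b. f x) = (\<Sum>y\<in>{a (Suc N)..b (Suc N)}. \<Sum>g\<in>tbox N a b. f (g(Suc N := y)))"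
proof -
  have "{1..Suc N} = insert (Suc N) {1..N}" by auto
  then have split: "tbox (Suc N) a b = (\<lambda>(y, g). g(Suc N := y)) ` ({a (Suc N)..b (Suc N)} \<times> tbox N a b)"
    unfolding tbox_def by (simp add: PiE_insert_eq)
  have inj: "inj_on (\<lambda>(y, g). g(Suc N := y)) ({a (Suc N)..b (Suc N)} \<times> tbox N a b)"
    unfolding tbox_def by (rule inj_combinator) auto
  show ?thesis unfolding split sum.reindex[OF inj] sum.cartesian_product by (simp add: case_prod_beta)
qed

lemma sum_level_tbox_Suc:
  "(\<Sum>x\<in>{x\<in>tbox (Suc N) a b. prefix_sum x (Suc N) = k}. f x)
    = (\<Sum>y\<in>{a (Suc N)..b (Suc N)}. if y \<le> k
        then (\<Sum>g\<in>{g\<in>tbox N a b. prefix_sum g N = k - y}. f (g(Suc N := y))) else 0)"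
proof -
  have "(\<Sum>x\<in>{x\<in>tbox (Suc N) a b. prefix_sum x (Suc N) = k}. f x)
      = (\<Sum>y\<in>{a (Suc N)..b (Suc N)}. \<Sum>g\<in>tbox N a b. if prefix_sum g N + y = k then f (g(Suc N := y)) else 0)"
    by (simp add: sum.inter_filter sum_tbox_Suc prefix_sum_upd_Suc)
  also have "\<dots> = (\<Sum>y\<in>{a (Suc N)..b (Suc N)}. if y \<le> k
        then (\<Sum>g\<in>{g\<in>tbox N a b. prefix_sum g N = k - y}. f (g(Suc N := y))) else 0)"
  proof (rule sum.cong[OF refl])
    fix y
    show "(\<Sum>g\<in>tbox N a b. if prefix_sum g N + y = k then f (g(Suc N := y)) else 0)
      = (if y \<le> k then (\<Sum>g\<in>{g\<in>tbox N a b. prefix_sum g N = k - y}. f (g(Suc N := y))) else 0)"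
      by (cases "y \<le> k") (auto simp: sum.inter_filter intro!: sum.cong sum.neutral)
  qed
  finally show ?thesis .
qed

lemma sum_tbox_by_level:
  "(\<Sum>x\<in>tbox N (\<lambda>_. 0) l. f x) = (\<Sum>k\<in>{0..prefix_sum l N}. \<Sum>x\<in>{x\<in>tbox N (\<lambda>_. 0) l. prefix_sum x N = k}. f x)"
proof -
  have "(\<lambda>x. prefix_sum x N) ` tbox N (\<lambda>_. 0) l \<subseteq> {0..prefix_sum l N}"
    using prefix_sum_mono tbox_memD by fastforce
  then show ?thesis by (intro sum.group[symmetric]) auto
qed

section \<open>The kernel E and the inverse pair B, C\<close>

definition E_factor :: "(nat \<Rightarrow> complex) \<Rightarrow> (nat \<Rightarrow> nat) \<Rightarrow> (nat \<Rightarrow> nat) \<Rightarrow> nat \<Rightarrow> complex" where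
  "E_factor \<alpha> u v p = (if u p \<le> v p then of_nat (v p choose u p)
      * pochhammer (of_nat (prefix_sum v (p - 1) + prefix_sum u p) + \<alpha> p) (v p - u p) else 0)"

definition E_kernel :: "nat \<Rightarrow> (nat \<Rightarrow> complex) \<Rightarrow> (nat \<Rightarrow> nat) \<Rightarrow> (nat \<Rightarrow> nat) \<Rightarrow> complex" where
  "E_kernel N \<alpha> u v = (\<Prod>p\<in>{1..N}. E_factor \<alpha> u v p)"

lemma E_kernel_Suc: "E_kernel (Suc N) \<alpha> u v = E_kernel N \<alpha> u v * E_factor \<alpha> u v (Suc N)"
  unfolding E_kernel_def by (simp add: atLeastAtMostSuc_conv mult.commute)

lemma E_kernel_upd_left: "E_kernel N \<alpha> (u(Suc N := y)) v = E_kernel N \<alpha> u v"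
  unfolding E_kernel_def E_factor_def by (intro prod.cong) (auto simp: prefix_sum_upd)

lemma E_kernel_upd_right: "E_kernel N \<alpha> u (v(Suc N := y)) = E_kernel N \<alpha> u v"
  unfolding E_kernel_def E_factor_def by (intro prod.cong) (auto simp: prefix_sum_upd)

lemma E_kernel_eq_0: "\<not> (\<forall>p\<in>{1..N}. u p \<le> v p) \<Longrightarrow> E_kernel N \<alpha> u v = 0"
  unfolding E_kernel_def E_factor_def by (auto intro!: prod_zero)

lemma E_kernel_same [simp]: "E_kernel N \<alpha> u u = 1"
  unfolding E_kernel_def E_factor_def by simp

lemma sum_level_E_kernel_mult:
  assumes "\<forall>p\<in>{1..N}. m p \<le> l p"
  shows "(\<Sum>x\<in>{x\<in>tbox N (\<lambda>_. 0) l. prefix_sum x N = k}. E_kernel N \<alpha> n x * E_kernel N \<alpha> x m)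
    = (if prefix_sum n N \<le> k
       then of_nat ((prefix_sum m N - prefix_sum n N) choose (k - prefix_sum n N)) else 0)
      * E_kernel N \<alpha> n m"
  using assms
proof (induction N arbitrary: k)
  case 0
  have "tbox 0 (\<lambda>_. 0) l = {\<lambda>_. undefined}" unfolding tbox_def by simp
  then show ?case by (cases k) (simp_all add: E_kernel_def)
next
  case (Suc N)
  let ?X = "tbox N (\<lambda>_. 0) l"
  define s t a b c where "s = prefix_sum n N" and "t = prefix_sum m N"
    and "a = n (Suc N)" and "b = m (Suc N)" and "c = \<alpha> (Suc N)"
  define F where "F y = (if a \<le> y then of_nat (y choose a) * pochhammer (of_nat (k - y + (s + a)) + c) (y - a) else 0)
      * (if y \<le> b then of_nat (b choose y) * pochhammer (of_nat (t + k) + c) (b - y) else 0)" for y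
  have level: "E_kernel (Suc N) \<alpha> n (g(Suc N := y)) * E_kernel (Suc N) \<alpha> (g(Suc N := y)) m
      = F y * (E_kernel N \<alpha> n g * E_kernel N \<alpha> g m)" if "y \<le> k" "prefix_sum g N = k - y" for g y
    using that unfolding E_kernel_Suc E_kernel_upd_left E_kernel_upd_right F_def E_factor_def
    by (simp add: prefix_sum_upd prefix_sum_upd_Suc prefix_sum_Suc a_def b_def c_def s_def t_def add_ac mult_ac)
  have "(\<Sum>x\<in>{x\<in>tbox (Suc N) (\<lambda>_. 0) l. prefix_sum x (Suc N) = k}.
        E_kernel (Suc N) \<alpha> n x * E_kernel (Suc N) \<alpha> x m)
      = (\<Sum>y\<in>{0..l (Suc N)}. if y \<le> k
          then F y * (\<Sum>g\<in>{g\<in>?X. prefix_sum g N = k - y}. E_kernel N \<alpha> n g * E_kernel N \<alpha> g m) else 0)"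
    unfolding sum_level_tbox_Suc by (intro sum.cong refl) (simp add: level sum_distrib_left)
  also have "\<dots> = (\<Sum>y\<in>{0..l (Suc N)}. (if y \<le> k \<and> s \<le> k - y then of_nat ((t - s) choose (k - y - s)) else 0)
      * F y) * E_kernel N \<alpha> n m"
    using Suc.IH Suc.prems unfolding sum_distrib_right s_def t_def by (intro sum.cong refl) auto
  also have "\<dots> = (if prefix_sum n (Suc N) \<le> k then of_nat ((prefix_sum m (Suc N) - prefix_sum n (Suc N))
      choose (k - prefix_sum n (Suc N))) else 0) * E_kernel (Suc N) \<alpha> n m"
  proof (cases "\<forall>p\<in>{1..N}. n p \<le> m p")
    case True
    have "s \<le> t" unfolding s_def t_def using True by (rule prefix_sum_mono)
    moreover have "b \<le> l (Suc N)" using Suc.prems unfolding b_def by auto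
    moreover have "E_factor \<alpha> n m (Suc N)
        = (if a \<le> b then of_nat (b choose a) * pochhammer (of_nat (t + (s + a)) + c) (b - a) else 0)"
      unfolding E_factor_def a_def b_def s_def t_def c_def by (simp add: prefix_sum_Suc)
    ultimately show ?thesis unfolding F_def E_kernel_Suc
      using sum_binomial_pochhammer_convolution[of b "l (Suc N)" s t k a c]
      by (simp add: prefix_sum_Suc s_def[symmetric] t_def[symmetric] a_def[symmetric] b_def[symmetric] algebra_simps)
  next
    case False
    then show ?thesis by (simp add: E_kernel_eq_0 E_kernel_Suc)
  qed
  finally show ?case .
qed

definition B_mat :: "nat \<Rightarrow> (nat \<Rightarrow> complex) \<Rightarrow> complex \<Rightarrow> (nat \<Rightarrow> nat) \<Rightarrow> (nat \<Rightarrow> nat) \<Rightarrow> complex" where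
  "B_mat N \<alpha> \<omega> n x = (-1) ^ prefix_sum n N * E_kernel N \<alpha> n x
      / pochhammer (of_nat (prefix_sum x N + prefix_sum n N) + \<omega>) (prefix_sum x N - prefix_sum n N)"

definition C_mat :: "nat \<Rightarrow> (nat \<Rightarrow> complex) \<Rightarrow> complex \<Rightarrow> (nat \<Rightarrow> nat) \<Rightarrow> (nat \<Rightarrow> nat) \<Rightarrow> complex" where
  "C_mat N \<alpha> \<omega> x m = (-1) ^ prefix_sum x N * E_kernel N \<alpha> x m
      / pochhammer (of_nat (2 * prefix_sum x N) + \<omega> + 1) (prefix_sum m N - prefix_sum x N)"

lemma sum_weighted_E_kernel_mult:
  assumes m: "m \<in> tbox N (\<lambda>_. 0) l"
  shows "(\<Sum>x\<in>tbox N (\<lambda>_. 0) l. w (prefix_sum x N) * (E_kernel N \<alpha> n x * E_kernel N \<alpha> x m))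
    = (\<Sum>j\<le>prefix_sum m N - prefix_sum n N.
        of_nat ((prefix_sum m N - prefix_sum n N) choose j) * w (prefix_sum n N + j)) * E_kernel N \<alpha> n m"
proof -
  define s u where "s = prefix_sum n N" and "u = prefix_sum m N"
  have m_le: "\<forall>p\<in>{1..N}. m p \<le> l p" using m tbox_memD by blast
  have "(\<Sum>x\<in>tbox N (\<lambda>_. 0) l. w (prefix_sum x N) * (E_kernel N \<alpha> n x * E_kernel N \<alpha> x m))
      = (\<Sum>k\<in>{0..prefix_sum l N}. w k
          * (\<Sum>x\<in>{x\<in>tbox N (\<lambda>_. 0) l. prefix_sum x N = k}. E_kernel N \<alpha> n x * E_kernel N \<alpha> x m))"
    unfolding sum_tbox_by_level[of _ N l] sum_distrib_left by (intro sum.cong refl) simp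
  also have "\<dots> = (\<Sum>k\<in>{0..prefix_sum l N}. if s \<le> k then w k * of_nat ((u - s) choose (k - s)) else 0)
      * E_kernel N \<alpha> n m"
    unfolding sum_level_E_kernel_mult[OF m_le] sum_distrib_right s_def u_def by (intro sum.cong refl) simp
  also have "\<dots> = (\<Sum>j\<le>u - s. of_nat ((u - s) choose j) * w (s + j)) * E_kernel N \<alpha> n m"
  proof (cases "\<forall>p\<in>{1..N}. n p \<le> m p")
    case True
    have "s \<le> u" unfolding s_def u_def using True by (rule prefix_sum_mono)
    moreover have "u \<le> prefix_sum l N" unfolding u_def using m_le by (rule prefix_sum_mono)
    ultimately show ?thesis by (subst sum_if_ge_shift) (auto simp: binomial_eq_0 mult.commute)
  next
    case False
    then show ?thesis by (simp add: E_kernel_eq_0)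
  qed
  finally show ?thesis unfolding s_def u_def .
qed

lemma sum_weighted_E_kernel_mult_delta:
  assumes n: "n \<in> tbox N (\<lambda>_. 0) l" and m: "m \<in> tbox N (\<lambda>_. 0) l"
    and coeff: "\<forall>p\<in>{1..N}. n p \<le> m p \<Longrightarrow>
      (\<Sum>j\<le>prefix_sum m N - prefix_sum n N.
        of_nat ((prefix_sum m N - prefix_sum n N) choose j) * w (prefix_sum n N + j))
      = (if prefix_sum m N - prefix_sum n N = 0 then 1 else 0)"
  shows "(\<Sum>x\<in>tbox N (\<lambda>_. 0) l. w (prefix_sum x N) * (E_kernel N \<alpha> n x * E_kernel N \<alpha> x m))
    = (if n = m then 1 else 0)"
proof -
  have "(\<Sum>x\<in>tbox N (\<lambda>_. 0) l. w (prefix_sum x N) * (E_kernel N \<alpha> n x * E_kernel N \<alpha> x m))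
    = (\<Sum>j\<le>prefix_sum m N - prefix_sum n N.
        of_nat ((prefix_sum m N - prefix_sum n N) choose j) * w (prefix_sum n N + j)) * E_kernel N \<alpha> n m"
    by (rule sum_weighted_E_kernel_mult[OF m])
  also have "\<dots> = (if n = m then 1 else 0)"
  proof (cases "\<forall>p\<in>{1..N}. n p \<le> m p")
    case True
    moreover have "prefix_sum n N \<le> prefix_sum m N" using True by (rule prefix_sum_mono)
    ultimately have "prefix_sum m N - prefix_sum n N = 0 \<longleftrightarrow> n = m"
      using tbox_eq_if_le_prefix_sum_eq[OF n m] by auto
    then show ?thesis using coeff[OF True] by auto
  next
    case False
    then show ?thesis by (auto simp: E_kernel_eq_0)
  qed
  finally show ?thesis .
qed

lemma shifted_nonvanishing:
  fixes \<omega> :: "'a::semiring_1"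
  assumes "\<forall>t. 1 \<le> t \<and> t \<le> 2 * L - 1 \<longrightarrow> \<omega> + of_nat t \<noteq> 0" "s \<le> u" "u \<le> L"
  shows "\<forall>t. 1 \<le> t \<and> t \<le> 2 * (u - s) - 1 \<longrightarrow> of_nat (2 * s) + \<omega> + of_nat t \<noteq> 0"
proof (intro allI impI)
  fix t assume t: "1 \<le> t \<and> t \<le> 2 * (u - s) - 1"
  then have "1 \<le> 2 * s + t \<and> 2 * s + t \<le> 2 * L - 1" using assms(2,3) by auto
  then have "\<omega> + of_nat (2 * s + t) \<noteq> 0" using assms(1) by blast
  then show "of_nat (2 * s) + \<omega> + of_nat t \<noteq> 0" by (simp add: add_ac)
qed

lemma B_mat_C_mat_inverse:
  assumes nz: "\<forall>t. 1 \<le> t \<and> t \<le> 2 * prefix_sum l N - 1 \<longrightarrow> \<omega> + of_nat t \<noteq> 0"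
    and n: "n \<in> tbox N (\<lambda>_. 0) l" and m: "m \<in> tbox N (\<lambda>_. 0) l"
  shows "(\<Sum>x\<in>tbox N (\<lambda>_. 0) l. B_mat N \<alpha> \<omega> n x * C_mat N \<alpha> \<omega> x m) = (if n = m then 1 else 0)"
proof -
  define s u where "s = prefix_sum n N" and "u = prefix_sum m N"
  define w where "w k = (-1) ^ s * (-1) ^ k
      / (pochhammer (of_nat (k + s) + \<omega>) (k - s) * pochhammer (of_nat (2 * k) + \<omega> + 1) (u - k))" for k
  have "(\<Sum>x\<in>tbox N (\<lambda>_. 0) l. B_mat N \<alpha> \<omega> n x * C_mat N \<alpha> \<omega> x m)
      = (\<Sum>x\<in>tbox N (\<lambda>_. 0) l. w (prefix_sum x N) * (E_kernel N \<alpha> n x * E_kernel N \<alpha> x m))"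
    unfolding B_mat_def C_mat_def w_def s_def u_def by (intro sum.cong refl) (simp add: add.commute)
  also have "\<dots> = (if n = m then 1 else 0)"
  proof -
    have coeff: "(\<Sum>j\<le>u - s. of_nat ((u - s) choose j) * w (s + j)) = (if u - s = 0 then 1 else 0)"
      if "\<forall>p\<in>{1..N}. n p \<le> m p"
  proof -
    have su: "s \<le> u" unfolding s_def u_def using that by (rule prefix_sum_mono)
    have "u \<le> prefix_sum l N" unfolding u_def using m tbox_memD by (blast intro: prefix_sum_mono)
    note nz' = shifted_nonvanishing[OF nz su this]
    define c where "c = of_nat (2 * s) + \<omega>"
    have "of_nat ((u - s) choose j) * w (s + j) = (-1) ^ j * of_nat ((u - s) choose j)
        / (pochhammer (c + of_nat j) j * pochhammer (c + of_nat (2 * j) + 1) (u - s - j))" for j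
      unfolding w_def c_def by (simp add: power_add algebra_simps)
    then show ?thesis
      using sum_alternating_binomial_div_pochhammer[OF nz'[folded c_def]] by simp
  qed
    show ?thesis using sum_weighted_E_kernel_mult_delta[OF n m coeff[unfolded s_def u_def]] .
  qed
  finally show ?thesis .
qed

lemma C_mat_B_mat_inverse:
  assumes nz: "\<forall>t. 1 \<le> t \<and> t \<le> 2 * prefix_sum l N - 1 \<longrightarrow> \<omega> + of_nat t \<noteq> 0"
    and n: "n \<in> tbox N (\<lambda>_. 0) l" and m: "m \<in> tbox N (\<lambda>_. 0) l"
  shows "(\<Sum>x\<in>tbox N (\<lambda>_. 0) l. C_mat N \<alpha> \<omega> n x * B_mat N \<alpha> \<omega> x m) = (if n = m then 1 else 0)"
proof -
  define s u where "s = prefix_sum n N" and "u = prefix_sum m N"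
  define w where "w k = (-1) ^ s * (-1) ^ k
      / (pochhammer (of_nat (2 * s) + \<omega> + 1) (k - s) * pochhammer (of_nat (u + k) + \<omega>) (u - k))" for k
  have "(\<Sum>x\<in>tbox N (\<lambda>_. 0) l. C_mat N \<alpha> \<omega> n x * B_mat N \<alpha> \<omega> x m)
      = (\<Sum>x\<in>tbox N (\<lambda>_. 0) l. w (prefix_sum x N) * (E_kernel N \<alpha> n x * E_kernel N \<alpha> x m))"
    unfolding B_mat_def C_mat_def w_def s_def u_def by (intro sum.cong refl) (simp add: add.commute)
  also have "\<dots> = (if n = m then 1 else 0)"
  proof -
    have coeff: "(\<Sum>j\<le>u - s. of_nat ((u - s) choose j) * w (s + j)) = (if u - s = 0 then 1 else 0)"
      if "\<forall>p\<in>{1..N}. n p \<le> m p"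
  proof -
    have su: "s \<le> u" unfolding s_def u_def using that by (rule prefix_sum_mono)
    have "u \<le> prefix_sum l N" unfolding u_def using m tbox_memD by (blast intro: prefix_sum_mono)
    note nz' = shifted_nonvanishing[OF nz su this]
    define c where "c = of_nat (2 * s) + \<omega>"
    have "of_nat ((u - s) choose j) * w (s + j) = (-1) ^ j * of_nat ((u - s) choose j)
        / (pochhammer (c + 1) j * pochhammer (c + of_nat (u - s) + of_nat j) (u - s - j))" for j
      unfolding w_def c_def using su by (simp add: power_add of_nat_diff algebra_simps)
    then show ?thesis
      using sum_alternating_binomial_div_pochhammer'[OF nz'[folded c_def]] by simp
  qed
    show ?thesis using sum_weighted_E_kernel_mult_delta[OF n m coeff[unfolded s_def u_def]] .
  qed
  finally show ?thesis .
qed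

section \<open>Factorisation of T and U\<close>

definition tuple_weight :: "nat \<Rightarrow> (nat \<Rightarrow> nat) \<Rightarrow> (nat \<Rightarrow> nat) \<Rightarrow> complex" where
  "tuple_weight N l u = (\<Prod>p\<in>{1..N}. pochhammer (- of_nat (l p)) (u p) / fact (u p))"

lemma tuple_weight_nonzero: "u \<in> tbox N (\<lambda>_. 0) l \<Longrightarrow> tuple_weight N l u \<noteq> 0"
  unfolding tuple_weight_def by (auto dest: tbox_memD simp: pochhammer_of_nat_eq_0_iff)

definition alpha_par :: "nat \<Rightarrow> (nat \<Rightarrow> nat) \<Rightarrow> (nat \<Rightarrow> complex) \<Rightarrow> complex \<Rightarrow> nat \<Rightarrow> complex" where
  "alpha_par N l a \<omega> p = psum l p N + a p + \<omega> + 1"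

definition gamma_par :: "nat \<Rightarrow> (nat \<Rightarrow> nat) \<Rightarrow> (nat \<Rightarrow> complex) \<Rightarrow> complex \<Rightarrow> nat \<Rightarrow> complex" where
  "gamma_par N l a \<omega>s p = psum l (p + 1) N - a p + \<omega>s"

lemma Tcoef_factor:
  fixes P Q P' Q' :: "'a::field_char_0"
  shows "pochhammer (- of_nat x) n * pochhammer (- of_nat i) n * pochhammer (- of_nat L) i
      / (pochhammer 1 n * pochhammer (- of_nat L) n * pochhammer 1 i) * P / Q * P' / Q'
    = (-1) ^ n * (of_nat (x choose n) * P) * ((-1) ^ n * (of_nat (i choose n) * P'))
      * (pochhammer (- of_nat L) i / fact i / (pochhammer (- of_nat L) n / fact n)) / (Q * Q')"
  by (simp add: pochhammer_neg_of_nat pochhammer_fact[symmetric] divide_inverse mult_ac)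

lemma Ucoef_factor:
  fixes P Q P' Q' :: "'a::field_char_0"
  shows "pochhammer (- of_nat n) x * pochhammer (- of_nat n) j * pochhammer (- of_nat L) n
      / (pochhammer 1 x * pochhammer (- of_nat L) j * pochhammer 1 n) * P / Q * P' / Q'
    = (-1) ^ x * (of_nat (n choose x) * P) * ((-1) ^ j * (of_nat (n choose j) * P'))
      * (pochhammer (- of_nat L) n / fact n / (pochhammer (- of_nat L) j / fact j)) / (Q * Q')"
  by (simp add: pochhammer_neg_of_nat pochhammer_fact[symmetric] divide_inverse mult_ac)

lemma prod_signed_E_factor:
  assumes "\<forall>p\<in>{1..N}. u p \<le> v p"
    and "\<forall>p\<in>{1..N}. z p = of_nat (prefix_sum v (p - 1) + prefix_sum u p) + \<alpha> p"
  shows "(\<Prod>p\<in>{1..N}. (-1) ^ u p * (of_nat (v p choose u p) * pochhammer (z p) (v p - u p)))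
    = (-1) ^ prefix_sum u N * E_kernel N \<alpha> u v"
  unfolding E_kernel_def prod_minus_one_power[symmetric] prod.distrib[symmetric]
  using assms by (intro prod.cong refl) (simp add: E_factor_def)

lemma prod_pochhammer_telescope:
  fixes c :: "'a::comm_ring_1"
  assumes "\<forall>p\<in>{1..N}. u p \<le> v p"
    and "\<forall>p\<in>{1..N}. z p = c + of_nat (prefix_sum v (p - 1)) - of_nat (prefix_sum u (p - 1))"
  shows "(\<Prod>p\<in>{1..N}. pochhammer (z p) (v p - u p)) = pochhammer c (prefix_sum v N - prefix_sum u N)"
  using assms
proof (induction N)
  case 0
  then show ?case by simp
next
  case (Suc N)
  have le: "prefix_sum u N \<le> prefix_sum v N" using Suc.prems(1) by (intro prefix_sum_mono) auto
  have IH: "(\<Prod>p\<in>{1..N}. pochhammer (z p) (v p - u p)) = pochhammer c (prefix_sum v N - prefix_sum u N)"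
    by (rule Suc.IH) (use Suc.prems in auto)
  have z_Suc: "z (Suc N) = c + of_nat (prefix_sum v N - prefix_sum u N)"
    using Suc.prems(2) le by (simp add: of_nat_diff)
  have "(\<Prod>p\<in>{1..Suc N}. pochhammer (z p) (v p - u p))
      = pochhammer c (prefix_sum v N - prefix_sum u N)
        * pochhammer (c + of_nat (prefix_sum v N - prefix_sum u N)) (v (Suc N) - u (Suc N))"
    using IH z_Suc by (simp add: atLeastAtMostSuc_conv mult.commute)
  also have "\<dots> = pochhammer c (prefix_sum v N - prefix_sum u N + (v (Suc N) - u (Suc N)))"
    by (rule pochhammer_product'[symmetric])
  also have "prefix_sum v N - prefix_sum u N + (v (Suc N) - u (Suc N)) = prefix_sum v (Suc N) - prefix_sum u (Suc N)"
    using le Suc.prems(1) by (simp add: prefix_sum_Suc)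
  finally show ?case .
qed

lemma Tcoef_eq_sum_tmin:
  "Tcoef N l \<omega> \<omega>s a i x = (\<Sum>n\<in>tbox N (\<lambda>_. 0) (tmin i x). tuple_weight N l i / tuple_weight N l n
      * B_mat N (gamma_par N l a \<omega>s) \<omega>s n i * B_mat N (alpha_par N l a \<omega>) \<omega> n x)"
proof -
  let ?\<alpha> = "alpha_par N l a \<omega>" and ?\<gamma> = "gamma_par N l a \<omega>s"
  define A where "A n p = (-1) ^ n p * (of_nat (x p choose n p)
      * pochhammer (psum x 1 (p - 1) + psum n 1 p + psum l p N + a p + \<omega> + 1) (x p - n p))" for n p
  define G where "G n p = (-1) ^ n p * (of_nat (i p choose n p)
      * pochhammer (psum i 1 (p - 1) + psum n 1 p + psum l (p + 1) N - a p + \<omega>s) (i p - n p))" for n p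
  define W where "W n p = pochhammer (- of_nat (l p)) (i p) / fact (i p)
      / (pochhammer (- of_nat (l p)) (n p) / fact (n p) :: complex)" for n p
  define Q where "Q n p = pochhammer (psum x 1 N + psum n 1 N + psum x 1 (p - 1) - psum n 1 (p - 1) + \<omega>)
      (x p - n p)" for n p
  define Q' where "Q' n p = pochhammer (psum i 1 N + psum n 1 N + psum i 1 (p - 1) - psum n 1 (p - 1) + \<omega>s)
      (i p - n p)" for n p
  have "Tcoef N l \<omega> \<omega>s a i x
      = (\<Sum>n\<in>tbox N (\<lambda>_. 0) (tmin i x). \<Prod>p\<in>{1..N}. A n p * G n p * W n p / (Q n p * Q' n p))"
    unfolding Tcoef_def Tcoef_factor A_def G_def W_def Q_def Q'_def ..
  also have "\<dots> = (\<Sum>n\<in>tbox N (\<lambda>_. 0) (tmin i x). tuple_weight N l i / tuple_weight N l n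
      * B_mat N ?\<gamma> \<omega>s n i * B_mat N ?\<alpha> \<omega> n x)"
  proof (rule sum.cong[OF refl])
    fix n assume "n \<in> tbox N (\<lambda>_. 0) (tmin i x)"
    then have le_x: "\<forall>p\<in>{1..N}. n p \<le> x p" and le_i: "\<forall>p\<in>{1..N}. n p \<le> i p"
      by (auto dest: tbox_memD simp: tmin_def)
    have "prod (A n) {1..N} = (-1) ^ prefix_sum n N * E_kernel N ?\<alpha> n x"
      unfolding A_def by (rule prod_signed_E_factor[OF le_x]) (unfold psum_1_eq_prefix_sum alpha_par_def, simp)
    moreover have "prod (G n) {1..N} = (-1) ^ prefix_sum n N * E_kernel N ?\<gamma> n i"
      unfolding G_def by (rule prod_signed_E_factor[OF le_i]) (unfold psum_1_eq_prefix_sum gamma_par_def, simp add: algebra_simps)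
    moreover have "prod (W n) {1..N} = tuple_weight N l i / tuple_weight N l n"
      unfolding W_def tuple_weight_def prod_dividef ..
    moreover have "prod (Q n) {1..N}
        = pochhammer (of_nat (prefix_sum x N + prefix_sum n N) + \<omega>) (prefix_sum x N - prefix_sum n N)"
      unfolding Q_def by (rule prod_pochhammer_telescope[OF le_x]) (unfold psum_1_eq_prefix_sum, simp add: algebra_simps)
    moreover have "prod (Q' n) {1..N}
        = pochhammer (of_nat (prefix_sum i N + prefix_sum n N) + \<omega>s) (prefix_sum i N - prefix_sum n N)"
      unfolding Q'_def by (rule prod_pochhammer_telescope[OF le_i]) (unfold psum_1_eq_prefix_sum, simp add: algebra_simps)
    ultimately show "(\<Prod>p\<in>{1..N}. A n p * G n p * W n p / (Q n p * Q' n p))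
      = tuple_weight N l i / tuple_weight N l n * B_mat N ?\<gamma> \<omega>s n i * B_mat N ?\<alpha> \<omega> n x"
      unfolding prod_dividef prod.distrib by (simp add: B_mat_def divide_inverse mult_ac)
  qed
  finally show ?thesis .
qed

lemma Tcoef_eq_sum_B_mat:
  assumes i: "i \<in> tbox N (\<lambda>_. 0) l"
  shows "Tcoef N l \<omega> \<omega>s a i x = (\<Sum>n\<in>tbox N (\<lambda>_. 0) l. tuple_weight N l i / tuple_weight N l n
      * B_mat N (gamma_par N l a \<omega>s) \<omega>s n i * B_mat N (alpha_par N l a \<omega>) \<omega> n x)"
  unfolding Tcoef_eq_sum_tmin
proof (rule sum.mono_neutral_left)
  show "tbox N (\<lambda>_. 0) (tmin i x) \<subseteq> tbox N (\<lambda>_. 0) l"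
  proof
    fix n assume n: "n \<in> tbox N (\<lambda>_. 0) (tmin i x)"
    have "n p \<le> l p" if "p \<in> {1..N}" for p
      using tbox_memD[OF n that] tbox_memD[OF i that] unfolding tmin_def by auto
    then show "n \<in> tbox N (\<lambda>_. 0) l" using n unfolding tbox_def PiE_iff by auto
  qed
next
  have "E_kernel N (gamma_par N l a \<omega>s) n i = 0 \<or> E_kernel N (alpha_par N l a \<omega>) n x = 0"
    if "n \<in> tbox N (\<lambda>_. 0) l - tbox N (\<lambda>_. 0) (tmin i x)" for n
    using that unfolding tbox_def tmin_def PiE_iff by (auto intro!: E_kernel_eq_0)
  then show "\<forall>n\<in>tbox N (\<lambda>_. 0) l - tbox N (\<lambda>_. 0) (tmin i x). tuple_weight N l i / tuple_weight N l n
    * B_mat N (gamma_par N l a \<omega>s) \<omega>s n i * B_mat N (alpha_par N l a \<omega>) \<omega> n x = 0"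
    by (auto simp: B_mat_def)
qed simp

lemma Ucoef_eq_sum_tmax:
  "Ucoef N l \<omega> \<omega>s a j x = (\<Sum>n\<in>tbox N (tmax x j) l. C_mat N (alpha_par N l a \<omega>) \<omega> x n
      * (tuple_weight N l n / tuple_weight N l j * C_mat N (gamma_par N l a \<omega>s) \<omega>s j n))"
proof -
  let ?\<alpha> = "alpha_par N l a \<omega>" and ?\<gamma> = "gamma_par N l a \<omega>s"
  define A where "A n p = (-1) ^ x p * (of_nat (n p choose x p)
      * pochhammer (psum x 1 p + psum n 1 (p - 1) + psum l p N + a p + \<omega> + 1) (n p - x p))" for n p
  define G where "G n p = (-1) ^ j p * (of_nat (n p choose j p)
      * pochhammer (psum j 1 p + psum n 1 (p - 1) + psum l (p + 1) N - a p + \<omega>s) (n p - j p))" for n p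
  define W where "W n p = pochhammer (- of_nat (l p)) (n p) / fact (n p)
      / (pochhammer (- of_nat (l p)) (j p) / fact (j p) :: complex)" for n p
  define Q where "Q n p = pochhammer (2 * psum x 1 N + psum n 1 (p - 1) - psum x 1 (p - 1) + \<omega> + 1)
      (n p - x p)" for n p
  define Q' where "Q' n p = pochhammer (2 * psum j 1 N + psum n 1 (p - 1) - psum j 1 (p - 1) + \<omega>s + 1)
      (n p - j p)" for n p
  have "Ucoef N l \<omega> \<omega>s a j x
      = (\<Sum>n\<in>tbox N (tmax x j) l. \<Prod>p\<in>{1..N}. A n p * G n p * W n p / (Q n p * Q' n p))"
    unfolding Ucoef_def Ucoef_factor A_def G_def W_def Q_def Q'_def ..
  also have "\<dots> = (\<Sum>n\<in>tbox N (tmax x j) l. C_mat N ?\<alpha> \<omega> x n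
      * (tuple_weight N l n / tuple_weight N l j * C_mat N ?\<gamma> \<omega>s j n))"
  proof (rule sum.cong[OF refl])
    fix n assume "n \<in> tbox N (tmax x j) l"
    then have le_x: "\<forall>p\<in>{1..N}. x p \<le> n p" and le_j: "\<forall>p\<in>{1..N}. j p \<le> n p"
      by (auto dest: tbox_memD simp: tmax_def)
    have "prod (A n) {1..N} = (-1) ^ prefix_sum x N * E_kernel N ?\<alpha> x n"
      unfolding A_def by (rule prod_signed_E_factor[OF le_x]) (unfold psum_1_eq_prefix_sum alpha_par_def, simp)
    moreover have "prod (G n) {1..N} = (-1) ^ prefix_sum j N * E_kernel N ?\<gamma> j n"
      unfolding G_def by (rule prod_signed_E_factor[OF le_j]) (unfold psum_1_eq_prefix_sum gamma_par_def, simp add: algebra_simps)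
    moreover have "prod (W n) {1..N} = tuple_weight N l n / tuple_weight N l j"
      unfolding W_def tuple_weight_def prod_dividef ..
    moreover have "prod (Q n) {1..N}
        = pochhammer (of_nat (2 * prefix_sum x N) + \<omega> + 1) (prefix_sum n N - prefix_sum x N)"
      unfolding Q_def by (rule prod_pochhammer_telescope[OF le_x]) (unfold psum_1_eq_prefix_sum, simp add: algebra_simps)
    moreover have "prod (Q' n) {1..N}
        = pochhammer (of_nat (2 * prefix_sum j N) + \<omega>s + 1) (prefix_sum n N - prefix_sum j N)"
      unfolding Q'_def by (rule prod_pochhammer_telescope[OF le_j]) (unfold psum_1_eq_prefix_sum, simp add: algebra_simps)
    ultimately show "(\<Prod>p\<in>{1..N}. A n p * G n p * W n p / (Q n p * Q' n p))
      = C_mat N ?\<alpha> \<omega> x n * (tuple_weight N l n / tuple_weight N l j * C_mat N ?\<gamma> \<omega>s j n)"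
      unfolding prod_dividef prod.distrib by (simp add: C_mat_def divide_inverse mult_ac)
  qed
  finally show ?thesis .
qed

lemma Ucoef_eq_sum_C_mat:
  "Ucoef N l \<omega> \<omega>s a j x = (\<Sum>n\<in>tbox N (\<lambda>_. 0) l. C_mat N (alpha_par N l a \<omega>) \<omega> x n
      * (tuple_weight N l n / tuple_weight N l j * C_mat N (gamma_par N l a \<omega>s) \<omega>s j n))"
  unfolding Ucoef_eq_sum_tmax
proof (rule sum.mono_neutral_left)
  show "tbox N (tmax x j) l \<subseteq> tbox N (\<lambda>_. 0) l"
    unfolding tbox_def by (auto simp: PiE_iff)
next
  have "E_kernel N (alpha_par N l a \<omega>) x n = 0 \<or> E_kernel N (gamma_par N l a \<omega>s) j n = 0"
    if "n \<in> tbox N (\<lambda>_. 0) l - tbox N (tmax x j) l" for n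
    using that unfolding tbox_def tmax_def PiE_iff by (auto intro!: E_kernel_eq_0)
  then show "\<forall>n\<in>tbox N (\<lambda>_. 0) l - tbox N (tmax x j) l. C_mat N (alpha_par N l a \<omega>) \<omega> x n
    * (tuple_weight N l n / tuple_weight N l j * C_mat N (gamma_par N l a \<omega>s) \<omega>s j n) = 0"
    by (auto simp: C_mat_def)
qed simp

lemma add_of_nat_nonzero:
  fixes \<omega> :: "'a::ring_1"
  assumes "\<forall>k::int. - 2 * int L + 1 \<le> k \<and> k \<le> -1 \<longrightarrow> \<omega> \<noteq> of_int k"
  shows "\<forall>t. 1 \<le> t \<and> t \<le> 2 * L - 1 \<longrightarrow> \<omega> + of_nat t \<noteq> 0"
proof (intro allI impI)
  fix t assume "1 \<le> t \<and> t \<le> 2 * L - 1"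
  then have "- 2 * int L + 1 \<le> - int t \<and> - int t \<le> -1" by linarith
  then have "\<omega> \<noteq> - of_nat t" using assms by (metis of_int_minus of_int_of_nat_eq)
  then show "\<omega> + of_nat t \<noteq> 0" by (simp add: eq_neg_iff_add_eq_0)
qed

theorem mainTheorem1:
  fixes N :: nat and l :: "nat \<Rightarrow> nat" and \<omega> \<omega>s :: complex and a :: "nat \<Rightarrow> complex"
    and i j :: "nat \<Rightarrow> nat"
  assumes "\<forall>k::int. - 2 * int (\<Sum>p\<in>{1..N}. l p) + 1 \<le> k \<and> k \<le> -1 \<longrightarrow> \<omega> \<noteq> of_int k"
    and "\<forall>k::int. - 2 * int (\<Sum>p\<in>{1..N}. l p) + 1 \<le> k \<and> k \<le> -1 \<longrightarrow> \<omega>s \<noteq> of_int k"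
    and "i \<in> tbox N (\<lambda>_. 0) l" and "j \<in> tbox N (\<lambda>_. 0) l"
  shows "(\<Sum>x\<in>tbox N (\<lambda>_. 0) l. Tcoef N l \<omega> \<omega>s a i x * Ucoef N l \<omega> \<omega>s a j x)
         = (if i = j then 1 else 0)"
proof -
  let ?X = "tbox N (\<lambda>_. 0) l" and ?w = "tuple_weight N l"
  let ?B\<alpha> = "B_mat N (alpha_par N l a \<omega>) \<omega>" and ?C\<alpha> = "C_mat N (alpha_par N l a \<omega>) \<omega>"
  let ?B\<gamma> = "B_mat N (gamma_par N l a \<omega>s) \<omega>s" and ?C\<gamma> = "C_mat N (gamma_par N l a \<omega>s) \<omega>s"
  note nz = add_of_nat_nonzero[OF assms(1)[folded prefix_sum_def]]
  note nz' = add_of_nat_nonzero[OF assms(2)[folded prefix_sum_def]]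
  have "(\<Sum>x\<in>?X. Tcoef N l \<omega> \<omega>s a i x * Ucoef N l \<omega> \<omega>s a j x)
      = (\<Sum>x\<in>?X. (\<Sum>n\<in>?X. ?w i / ?w n * ?B\<gamma> n i * ?B\<alpha> n x) * (\<Sum>m\<in>?X. ?C\<alpha> x m * (?w m / ?w j * ?C\<gamma> j m)))"
    unfolding Tcoef_eq_sum_B_mat[OF assms(3)] Ucoef_eq_sum_C_mat ..
  also have "\<dots> = (\<Sum>n\<in>?X. \<Sum>m\<in>?X. ?w i / ?w n * ?B\<gamma> n i * (?w m / ?w j * ?C\<gamma> j m)
      * (\<Sum>x\<in>?X. ?B\<alpha> n x * ?C\<alpha> x m))"
    by (rule sum_product_reassoc)
  also have "\<dots> = (\<Sum>n\<in>?X. ?w i / ?w n * ?B\<gamma> n i * (?w n / ?w j * ?C\<gamma> j n))"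
    by (intro sum.cong refl) (simp add: B_mat_C_mat_inverse[OF nz] if_distrib[of "\<lambda>z. _ * z"] cong: if_cong)
  also have "\<dots> = ?w i / ?w j * (\<Sum>n\<in>?X. ?C\<gamma> j n * ?B\<gamma> n i)"
    unfolding sum_distrib_left using tuple_weight_nonzero by (intro sum.cong refl) (simp add: field_simps)
  also have "\<dots> = (if i = j then 1 else 0)"
    using C_mat_B_mat_inverse[OF nz' assms(4,3)] tuple_weight_nonzero[OF assms(3)] by auto
  finally show ?thesis .
qed

end
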